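(* For every positive integer $n$, $N'(n,1,0)=n$.
   Context: $\mathbb{Z}_4$ is the ring of integers modulo $4$; a $\mathbb{Z}_4$-code of length $n$ is a $\mathbb{Z}_4$-submodule of $\mathbb{Z}_4^n$. Two codes are equivalent if one is obtained from the other by permuting coordinates and changing the signs of some coordinates. Every $\mathbb{Z}_4$-code is permutation-equivalent to one with generator matrix $\begin{pmatrix} I_{k_1} & A & B \\ O & 2I_{k_2} & 2D\end{pmatrix}$ with $A,D$ $(0,1)$-matrices and $B$ a $\mathbb{Z}_4$-matrix; the code then has type $4^{k_1}2^{k_2}$. The trivial extension of a code $C$ of length $n-1$ is $\{(c,0)\mid c\in C\}$ (the only code of length $0$ is the zero code). $N'(n,k_1,k_2)$ denotes the number of equivalence classes of $\mathbb{Z}_4$-codes of length $n$ and type $4^{k_1}2^{k_2}$ that are not equivalent to the trivial extension of any $\mathbb{Z}_4$-code of length $n-1$. *)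

theory Defs
  imports Main "HOL-Combinatorics.Permutations"
begin

text \<open>Vectors of length n over Z4: functions nat => int with entries in {0..3}
  on coordinates 0..n-1 and 0 elsewhere.\<close>

definition Z4vec :: "nat \<Rightarrow> (nat \<Rightarrow> int) set" where
  "Z4vec n = {v. \<forall>i. (i < n \<longrightarrow> v i \<in> {0..3}) \<and> (n \<le> i \<longrightarrow> v i = 0)}"

definition z4add :: "(nat \<Rightarrow> int) \<Rightarrow> (nat \<Rightarrow> int) \<Rightarrow> (nat \<Rightarrow> int)" where
  "z4add u v = (\<lambda>i. (u i + v i) mod 4)"

definition z4smult :: "int \<Rightarrow> (nat \<Rightarrow> int) \<Rightarrow> (nat \<Rightarrow> int)" where
  "z4smult a v = (\<lambda>i. (a * v i) mod 4)"

definition is_code :: "nat \<Rightarrow> (nat \<Rightarrow> int) set \<Rightarrow> bool" where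
  "is_code n C \<longleftrightarrow> C \<subseteq> Z4vec n \<and> (\<lambda>_. 0) \<in> C \<and>
     (\<forall>u\<in>C. \<forall>v\<in>C. z4add u v \<in> C) \<and> (\<forall>a. \<forall>v\<in>C. z4smult a v \<in> C)"

definition z4span :: "nat \<Rightarrow> (nat \<Rightarrow> nat \<Rightarrow> int) \<Rightarrow> (nat \<Rightarrow> int) set" where
  "z4span m r = {(\<lambda>i. (\<Sum>j<m. c j * r j i) mod 4) | c. True}"

text \<open>Rows of the standard-form generator matrix
  ( I_k1  A     B  )
  ( O     2I_k2 2D )  of length n.\<close>
definition std_gen :: "nat \<Rightarrow> nat \<Rightarrow> nat \<Rightarrow> (nat \<Rightarrow> nat \<Rightarrow> int) \<Rightarrow> (nat \<Rightarrow> nat \<Rightarrow> int)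
    \<Rightarrow> (nat \<Rightarrow> nat \<Rightarrow> int) \<Rightarrow> nat \<Rightarrow> nat \<Rightarrow> int" where
  "std_gen n k1 k2 A B D j i =
     (if i \<ge> n then 0
      else if j < k1 then
        (if i < k1 then (if i = j then 1 else 0)
         else if i < k1 + k2 then A j (i - k1)
         else B j (i - k1 - k2))
      else
        (if i < k1 then 0
         else if i < k1 + k2 then (if i - k1 = j - k1 then 2 else 0)
         else 2 * D (j - k1) (i - k1 - k2)))"

definition perm_code :: "(nat \<Rightarrow> nat) \<Rightarrow> (nat \<Rightarrow> int) set \<Rightarrow> (nat \<Rightarrow> int) set" where
  "perm_code \<sigma> C = (\<lambda>v. v \<circ> \<sigma>) ` C"

text \<open>C (a code of length n) has type 4^k1 2^k2: it is permutation-equivalent to the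
  code generated by a standard-form matrix with A, D (0,1)-matrices, B a Z4-matrix.\<close>
definition has_type :: "nat \<Rightarrow> (nat \<Rightarrow> int) set \<Rightarrow> nat \<Rightarrow> nat \<Rightarrow> bool" where
  "has_type n C k1 k2 \<longleftrightarrow> k1 + k2 \<le> n \<and>
     (\<exists>\<sigma> A B D. \<sigma> permutes {..<n} \<and>
        (\<forall>j i. A j i \<in> {0,1}) \<and> (\<forall>j i. B j i \<in> {0..3}) \<and> (\<forall>j i. D j i \<in> {0,1}) \<and>
        perm_code \<sigma> C = z4span (k1 + k2) (std_gen n k1 k2 A B D))"

definition code_equiv :: "nat \<Rightarrow> (nat \<Rightarrow> int) set \<Rightarrow> (nat \<Rightarrow> int) set \<Rightarrow> bool" where
  "code_equiv n C D \<longleftrightarrow> (\<exists>\<sigma> s. \<sigma> permutes {..<n} \<and> (\<forall>i. s i \<in> {1, -1}) \<and>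
      D = (\<lambda>v. \<lambda>i. (s i * v (\<sigma> i)) mod 4) ` C)"

definition triv_ext :: "nat \<Rightarrow> (nat \<Rightarrow> int) set \<Rightarrow> (nat \<Rightarrow> int) set" where
  "triv_ext m C = (\<lambda>c. c(m := 0)) ` C"

definition nontriv_codes :: "nat \<Rightarrow> nat \<Rightarrow> nat \<Rightarrow> (nat \<Rightarrow> int) set set" where
  "nontriv_codes n k1 k2 = {C. is_code n C \<and> has_type n C k1 k2 \<and>
      \<not> (\<exists>C'. is_code (n - 1) C' \<and> code_equiv n C (triv_ext (n - 1) C'))}"

definition Nprime :: "nat \<Rightarrow> nat \<Rightarrow> nat \<Rightarrow> nat" where
  "Nprime n k1 k2 = card (nontriv_codes n k1 k2 //
      {(C, D). C \<in> nontriv_codes n k1 k2 \<and> D \<in> nontriv_codes n k1 k2 \<and> code_equiv n C D})"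

end

theory Submission
  imports Defs
begin

text \<open>A code of type \<open>4\<^sup>1\<close> is generated by a single vector \<open>w\<close> with an entry 1, and it is
  equivalent to a trivial extension exactly when \<open>w\<close> has a zero coordinate. The entries
  of a nowhere-zero \<open>w\<close> are \<open>\<plusminus>1\<close> or 2, and two such generators are related by a signed
  permutation iff they have equally many entries 2, a number which ranges over
  \<open>0, \<dots>, n - 1\<close>. Hence there are exactly \<open>n\<close> classes.\<close>

lemma permutes_exists_map_subsets:
  assumes "finite S" "A \<subseteq> S" "B \<subseteq> S" "card A = card B"
  obtains \<sigma> where "\<sigma> permutes S" "\<forall>x\<in>A. \<sigma> x \<in> B" "\<forall>x\<in>S - A. \<sigma> x \<in> S - B"
proof -
  have "finite A" "finite B" using assms finite_subset by auto
  then obtain f where f: "bij_betw f A B" using finite_same_card_bij assms(4) by blast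
  have "card (S - A) = card (S - B)"
    using assms \<open>finite A\<close> \<open>finite B\<close> by (simp add: card_Diff_subset)
  then obtain g where g: "bij_betw g (S - A) (S - B)"
    using finite_same_card_bij assms(1) by (meson finite_Diff)
  define \<sigma> where "\<sigma> x = (if x \<in> A then f x else if x \<in> S then g x else x)" for x
  have \<sigma>A: "bij_betw \<sigma> A B"
    using f by (rule bij_betw_cong[THEN iffD1, rotated]) (simp add: \<sigma>_def)
  have \<sigma>S: "bij_betw \<sigma> (S - A) (S - B)"
    using g by (rule bij_betw_cong[THEN iffD1, rotated]) (simp add: \<sigma>_def)
  have "bij_betw \<sigma> (A \<union> (S - A)) (B \<union> (S - B))"
    using \<sigma>A \<sigma>S by (rule bij_betw_combine) auto
  then have "bij_betw \<sigma> S S" using assms by (simp add: Un_absorb1)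
  then have "\<sigma> permutes S" by (rule bij_imp_permutes) (use assms in \<open>auto simp: \<sigma>_def\<close>)
  then show ?thesis
    using that \<sigma>A \<sigma>S by (auto simp: bij_betw_def)
qed

lemma card_quotient_eq_card_image:
  assumes "R \<subseteq> A \<times> A" "\<And>x y. x \<in> A \<Longrightarrow> y \<in> A \<Longrightarrow> (x, y) \<in> R \<longleftrightarrow> f x = f y"
  shows "card (A // R) = card (f ` A)"
proof -
  define fiber where "fiber k = {x \<in> A. f x = k}" for k
  have "R `` {x} = fiber (f x)" if "x \<in> A" for x
    using assms that unfolding fiber_def by auto
  then have "A // R = fiber ` f ` A"
    unfolding quotient_def image_image by auto
  moreover have "inj_on fiber (f ` A)"
    by (rule inj_onI) (auto simp: fiber_def)
  ultimately show ?thesis by (simp add: card_image)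
qed

definition cyclic_code :: "(nat \<Rightarrow> int) \<Rightarrow> (nat \<Rightarrow> int) set" where
  "cyclic_code w = range (\<lambda>k::int. \<lambda>i. (k * w i) mod 4)"

definition signed_perm :: "(nat \<Rightarrow> nat) \<Rightarrow> (nat \<Rightarrow> int) \<Rightarrow> (nat \<Rightarrow> int) \<Rightarrow> nat \<Rightarrow> int" where
  "signed_perm \<sigma> s v = (\<lambda>i. (s i * v (\<sigma> i)) mod 4)"

definition even_coords :: "nat \<Rightarrow> (nat \<Rightarrow> int) \<Rightarrow> nat set" where
  "even_coords n w = {i. i < n \<and> even (w i)}"

definition even_coord_count :: "nat \<Rightarrow> (nat \<Rightarrow> int) set \<Rightarrow> nat" where
  "even_coord_count n C = card {i. i < n \<and> (\<forall>u\<in>C. even (u i))}"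

lemma code_equiv_signed_perm:
  "code_equiv n C D \<longleftrightarrow>
     (\<exists>\<sigma> s. \<sigma> permutes {..<n} \<and> (\<forall>i. s i \<in> {1, -1}) \<and> D = signed_perm \<sigma> s ` C)"
  unfolding code_equiv_def signed_perm_def ..

lemma Z4vec_mod4: "w \<in> Z4vec n \<Longrightarrow> w i mod 4 = w i"
  unfolding Z4vec_def by (cases "i < n") auto

lemma Z4vec_nonzero_cases: "w \<in> Z4vec n \<Longrightarrow> w i \<noteq> 0 \<Longrightarrow> w i = 1 \<or> w i = 2 \<or> w i = 3"
  unfolding Z4vec_def by (cases "i < n") auto

lemma Z4vec_comp_permutes:
  assumes "\<sigma> permutes {..<n}" "w \<in> Z4vec n"
  shows "w \<circ> \<sigma> \<in> Z4vec n"
  using assms permutes_in_image[OF assms(1)] permutes_not_in[OF assms(1)]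
  unfolding Z4vec_def by auto

lemma mem_cyclic_code_self:
  assumes "\<And>i. w i mod 4 = w i"
  shows "w \<in> cyclic_code w"
  unfolding cyclic_code_def by (rule range_eqI[of _ _ 1]) (simp add: assms)

lemma cyclic_code_cong_even:
  assumes "cyclic_code u = cyclic_code v" "\<And>i. u i mod 4 = u i" "\<And>i. v i mod 4 = v i"
  shows "even (u i) \<longleftrightarrow> even (v i)"
proof -
  have "u \<in> cyclic_code v" "v \<in> cyclic_code u"
    using mem_cyclic_code_self assms by blast+
  then obtain k l where "u = (\<lambda>i. (k * v i) mod 4)" "v = (\<lambda>i. (l * u i) mod 4)"
    unfolding cyclic_code_def by blast
  then have u: "u i = (k * v i) mod 4" and v: "v i = (l * u i) mod 4" by metis+
  have "even (v i) \<Longrightarrow> even (u i)" unfolding u by (simp add: dvd_mod_iff)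
  moreover have "even (u i) \<Longrightarrow> even (v i)" unfolding v by (simp add: dvd_mod_iff)
  ultimately show ?thesis by blast
qed

lemma signed_perm_cyclic_code:
  "signed_perm \<sigma> s ` cyclic_code w = cyclic_code (signed_perm \<sigma> s w)"
proof -
  have "signed_perm \<sigma> s (\<lambda>i. (k * w i) mod 4) = (\<lambda>i. (k * signed_perm \<sigma> s w i) mod 4)" for k
    by (simp add: signed_perm_def mod_mult_right_eq mult.left_commute)
  then show ?thesis unfolding cyclic_code_def image_image by simp
qed

lemma perm_code_cyclic_code: "perm_code \<sigma> (cyclic_code w) = cyclic_code (w \<circ> \<sigma>)"
  unfolding perm_code_def cyclic_code_def image_image by (simp add: comp_def)

lemma perm_code_inv_perm_code:
  assumes "\<sigma> permutes S"
  shows "perm_code (inv \<sigma>) (perm_code \<sigma> C) = C"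
  using permutes_inv_o(1)[OF assms] unfolding perm_code_def image_image
  by (simp add: o_assoc[symmetric])

lemma is_code_cyclic_code:
  assumes "w \<in> Z4vec n"
  shows "is_code n (cyclic_code w)"
  unfolding is_code_def
proof (intro conjI ballI allI)
  show "cyclic_code w \<subseteq> Z4vec n"
    using assms unfolding cyclic_code_def Z4vec_def by auto
  show "(\<lambda>_. 0) \<in> cyclic_code w"
    unfolding cyclic_code_def by (rule range_eqI[of _ _ 0]) simp
next
  fix u v assume "u \<in> cyclic_code w" "v \<in> cyclic_code w"
  then obtain k l where "u = (\<lambda>i. (k * w i) mod 4)" "v = (\<lambda>i. (l * w i) mod 4)"
    unfolding cyclic_code_def by blast
  then have "z4add u v = (\<lambda>i. ((k + l) * w i) mod 4)"
    unfolding z4add_def by (auto simp: mod_add_eq distrib_right)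
  then show "z4add u v \<in> cyclic_code w" unfolding cyclic_code_def by auto
next
  fix a v assume "v \<in> cyclic_code w"
  then obtain k where "v = (\<lambda>i. (k * w i) mod 4)"
    unfolding cyclic_code_def by blast
  then have "z4smult a v = (\<lambda>i. (a * k * w i) mod 4)"
    unfolding z4smult_def by (auto simp: mod_mult_right_eq mult.assoc)
  then show "z4smult a v \<in> cyclic_code w" unfolding cyclic_code_def by auto
qed

lemma z4span_one: "z4span 1 r = cyclic_code (r 0)"
  unfolding z4span_def cyclic_code_def
  by (auto intro!: exI[where x = "\<lambda>_. _"])

lemma has_type_cyclic_code:
  assumes w: "w \<in> Z4vec n" and "n \<ge> 1" "w 0 = 1"
  shows "has_type n (cyclic_code w) 1 0"
proof -
  define B where "B j i = w (i + 1)" for j i :: nat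
  have "std_gen n 1 0 (\<lambda>_ _. 0) B (\<lambda>_ _. 0) 0 = w"
    using assms unfolding std_gen_def B_def Z4vec_def by (auto simp: fun_eq_iff)
  then have "perm_code id (cyclic_code w) = z4span (1 + 0) (std_gen n 1 0 (\<lambda>_ _. 0) B (\<lambda>_ _. 0))"
    unfolding add_0_right z4span_one by (simp add: perm_code_def)
  moreover have "B j i \<in> {0..3}" for j i
    using w unfolding B_def Z4vec_def by (cases "i + 1 < n") auto
  ultimately show ?thesis
    unfolding has_type_def using \<open>n \<ge> 1\<close>
    by (intro conjI exI[of _ id] exI[of _ "\<lambda>_ _. 0"] exI[of _ B]) auto
qed

lemma has_type_1_0_imp_cyclic_code:
  assumes "has_type n C 1 0" "n \<ge> 1"
  obtains w where "w \<in> Z4vec n" "\<exists>i<n. odd (w i)" "C = cyclic_code w"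
proof -
  obtain \<sigma> A B D where \<sigma>: "\<sigma> permutes {..<n}" and B: "\<forall>j i. B j i \<in> {0..3}"
    and C: "perm_code \<sigma> C = z4span (1 + 0) (std_gen n 1 0 A B D)"
    using assms(1) unfolding has_type_def by blast
  define g where "g = std_gen n 1 0 A B D 0"
  have g: "g \<in> Z4vec n" and g0: "g 0 = 1"
    using B \<open>n \<ge> 1\<close> unfolding g_def std_gen_def Z4vec_def by auto
  have \<sigma>': "inv \<sigma> permutes {..<n}" using \<sigma> by (rule permutes_inv)
  have "C = perm_code (inv \<sigma>) (cyclic_code g)"
    using C perm_code_inv_perm_code[OF \<sigma>] unfolding add_0_right z4span_one g_def by metis
  then have "C = cyclic_code (g \<circ> inv \<sigma>)" by (simp add: perm_code_cyclic_code)
  moreover have "g \<circ> inv \<sigma> \<in> Z4vec n" using Z4vec_comp_permutes[OF \<sigma>' g] .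
  moreover have "\<sigma> 0 < n" "odd ((g \<circ> inv \<sigma>) (\<sigma> 0))"
    using permutes_in_image[OF \<sigma>, of 0] \<open>n \<ge> 1\<close> permutes_inverses(2)[OF \<sigma>] g0 by auto
  ultimately show ?thesis using that by blast
qed

lemma triv_ext_vanishes: "c \<in> triv_ext m C \<Longrightarrow> c m = 0"
  unfolding triv_ext_def by auto

lemma triv_ext_cyclic_code:
  assumes "w m = 0"
  shows "triv_ext m (cyclic_code w) = cyclic_code w"
proof -
  have "(\<lambda>i. (k * w i) mod 4)(m := 0) = (\<lambda>i. (k * w i) mod 4)" for k
    using assms by (intro fun_upd_idem) simp
  then show ?thesis unfolding triv_ext_def cyclic_code_def image_image by simp
qed

lemma trivial_ext_if_zero_coord:
  assumes w: "w \<in> Z4vec n" and "j < n" "w j = 0"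
  shows "\<exists>C'. is_code (n - 1) C' \<and> code_equiv n (cyclic_code w) (triv_ext (n - 1) C')"
proof -
  define \<tau> where "\<tau> = transpose j (n - 1)"
  have \<tau>: "\<tau> permutes {..<n}" using assms unfolding \<tau>_def by (intro permutes_swap_id) auto
  have w\<tau>: "w \<circ> \<tau> \<in> Z4vec n" using Z4vec_comp_permutes[OF \<tau> w] .
  have last: "(w \<circ> \<tau>) (n - 1) = 0" using assms by (simp add: \<tau>_def)
  have "w \<circ> \<tau> \<in> Z4vec (n - 1)"
    unfolding Z4vec_def
  proof (intro CollectI allI conjI impI)
    fix i assume "i < n - 1"
    then show "(w \<circ> \<tau>) i \<in> {0..3}" using w\<tau> unfolding Z4vec_def by simp
  next
    fix i assume "n - 1 \<le> i"
    then show "(w \<circ> \<tau>) i = 0" using w\<tau> last unfolding Z4vec_def by (cases "i = n - 1") auto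
  qed
  moreover have "triv_ext (n - 1) (cyclic_code (w \<circ> \<tau>)) = cyclic_code (w \<circ> \<tau>)"
    using last by (rule triv_ext_cyclic_code)
  moreover have "signed_perm \<tau> (\<lambda>_. 1) w = w \<circ> \<tau>"
    using Z4vec_mod4[OF w] by (simp add: signed_perm_def comp_def)
  then have "code_equiv n (cyclic_code w) (cyclic_code (w \<circ> \<tau>))"
    unfolding code_equiv_signed_perm using \<tau> signed_perm_cyclic_code[of \<tau> "\<lambda>_. 1" w]
    by (intro exI[of _ \<tau>] exI[of _ "\<lambda>_. 1"]) auto
  ultimately show ?thesis using is_code_cyclic_code by metis
qed

lemma no_trivial_ext_if_nonzero:
  assumes w: "w \<in> Z4vec n" and nz: "\<forall>i<n. w i \<noteq> 0" and "n \<ge> 1"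
  shows "\<not> (\<exists>C'. is_code (n - 1) C' \<and> code_equiv n (cyclic_code w) (triv_ext (n - 1) C'))"
proof
  assume "\<exists>C'. is_code (n - 1) C' \<and> code_equiv n (cyclic_code w) (triv_ext (n - 1) C')"
  then obtain C' \<sigma> s where \<sigma>: "\<sigma> permutes {..<n}" and s: "s (n - 1) \<in> {1, -1}"
    and C': "triv_ext (n - 1) C' = signed_perm \<sigma> s ` cyclic_code w"
    unfolding code_equiv_signed_perm by blast
  have "signed_perm \<sigma> s w \<in> triv_ext (n - 1) C'"
    unfolding C' using mem_cyclic_code_self[of w] Z4vec_mod4[OF w] by blast
  then have "(s (n - 1) * w (\<sigma> (n - 1))) mod 4 = 0"
    using triv_ext_vanishes unfolding signed_perm_def by metis
  moreover have "\<sigma> (n - 1) < n" using permutes_in_image[OF \<sigma>] \<open>n \<ge> 1\<close> by simp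
  then have "w (\<sigma> (n - 1)) \<in> {1, 2, 3}" using Z4vec_nonzero_cases[OF w] nz by blast
  ultimately show False using s by auto
qed

lemma card_even_coords_eq_if_code_equiv:
  assumes "code_equiv n (cyclic_code w) (cyclic_code w')" "w \<in> Z4vec n" "w' \<in> Z4vec n"
  shows "card (even_coords n w) = card (even_coords n w')"
proof -
  obtain \<sigma> s where \<sigma>: "\<sigma> permutes {..<n}" and s: "\<forall>i. s i \<in> {1, -1}"
    and eq: "cyclic_code w' = cyclic_code (signed_perm \<sigma> s w)"
    using assms(1) unfolding code_equiv_signed_perm signed_perm_cyclic_code by blast
  have "even (w' i) \<longleftrightarrow> even (signed_perm \<sigma> s w i)" for i
    using cyclic_code_cong_even[OF eq Z4vec_mod4[OF assms(3)]] by (simp add: signed_perm_def)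
  also have "\<dots> i \<longleftrightarrow> even (w (\<sigma> i))" for i
    using s[rule_format, of i] by (auto simp: signed_perm_def dvd_mod_iff)
  finally have "even_coords n w' = \<sigma> -` even_coords n w"
    using permutes_in_image[OF \<sigma>] unfolding even_coords_def by auto
  then show ?thesis
    using card_vimage_inj[OF permutes_inj[OF \<sigma>]] permutes_surj[OF \<sigma>] by simp
qed

lemma sign_adjust_mod4:
  fixes a b :: int
  assumes "a \<in> {1, 2, 3}" "b \<in> {1, 2, 3}" "even a \<longleftrightarrow> even b"
  shows "((if a = b then 1 else -1) * a) mod 4 = b"
  using assms by auto

text \<open>A nonzero residue mod 4 is determined up to sign by its parity, so it suffices to
  permute even coordinates onto even ones and odd onto odd ones.\<close>

lemma code_equiv_if_card_even_coords_eq: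
  assumes w: "w \<in> Z4vec n" "\<forall>i<n. w i \<noteq> 0" and w': "w' \<in> Z4vec n" "\<forall>i<n. w' i \<noteq> 0"
    and card: "card (even_coords n w) = card (even_coords n w')"
  shows "code_equiv n (cyclic_code w) (cyclic_code w')"
proof -
  have "even_coords n w' \<subseteq> {..<n}" "even_coords n w \<subseteq> {..<n}"
    unfolding even_coords_def by auto
  then obtain \<sigma> where \<sigma>: "\<sigma> permutes {..<n}"
    and \<sigma>_even: "\<forall>i\<in>even_coords n w'. \<sigma> i \<in> even_coords n w"
    and \<sigma>_odd: "\<forall>i\<in>{..<n} - even_coords n w'. \<sigma> i \<in> {..<n} - even_coords n w"
    using permutes_exists_map_subsets[of "{..<n}"] card by (metis finite_lessThan)
  define s :: "nat \<Rightarrow> int" where "s i = (if w (\<sigma> i) = w' i then 1 else -1)" for i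
  have "w' i = signed_perm \<sigma> s w i" for i
  proof (cases "i < n")
    case True
    then have "\<sigma> i < n" using permutes_in_image[OF \<sigma>] by simp
    moreover have "even (w (\<sigma> i)) \<longleftrightarrow> even (w' i)"
      using \<sigma>_even \<sigma>_odd True \<open>\<sigma> i < n\<close> unfolding even_coords_def by auto
    ultimately show ?thesis
      using sign_adjust_mod4 Z4vec_nonzero_cases w w' True
      unfolding signed_perm_def s_def by simp
  next
    case False
    then show ?thesis
      using permutes_not_in[OF \<sigma>] w w' unfolding Z4vec_def signed_perm_def s_def by auto
  qed
  then have "w' = signed_perm \<sigma> s w" by (rule ext)
  then have "cyclic_code w' = signed_perm \<sigma> s ` cyclic_code w"
    by (simp add: signed_perm_cyclic_code)
  then show ?thesis
    unfolding code_equiv_signed_perm using \<sigma> by (intro exI[of _ \<sigma>] exI[of _ s]) (simp add: s_def)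
qed

lemma even_coord_count_cyclic_code:
  assumes "w \<in> Z4vec n"
  shows "even_coord_count n (cyclic_code w) = card (even_coords n w)"
proof -
  have "(\<forall>u\<in>cyclic_code w. even (u i)) \<longleftrightarrow> even (w i)" for i
    using mem_cyclic_code_self[of w] Z4vec_mod4[OF assms]
    by (auto simp: cyclic_code_def dvd_mod_iff)
  then show ?thesis unfolding even_coord_count_def even_coords_def by simp
qed

lemma card_even_coords_less:
  assumes "i < n" "odd (w i)"
  shows "card (even_coords n w) < n"
proof -
  have "even_coords n w \<subset> {..<n}" using assms unfolding even_coords_def by auto
  then show ?thesis using psubset_card_mono[of "{..<n}"] by simp
qed

lemma nontriv_codes_1_0_cyclic:
  assumes "n \<ge> 1" "C \<in> nontriv_codes n 1 0"
  obtains w where "w \<in> Z4vec n" "\<forall>i<n. w i \<noteq> 0" "\<exists>i<n. odd (w i)" "C = cyclic_code w"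
proof -
  have "has_type n C 1 0"
    and nontriv: "\<not> (\<exists>C'. is_code (n - 1) C' \<and> code_equiv n C (triv_ext (n - 1) C'))"
    using assms(2) unfolding nontriv_codes_def by auto
  then obtain w where "w \<in> Z4vec n" "\<exists>i<n. odd (w i)" "C = cyclic_code w"
    using has_type_1_0_imp_cyclic_code \<open>n \<ge> 1\<close> by metis
  moreover have "\<forall>i<n. w i \<noteq> 0"
    using trivial_ext_if_zero_coord calculation nontriv by blast
  ultimately show ?thesis using that by blast
qed

lemma cyclic_code_in_nontriv_codes:
  assumes "w \<in> Z4vec n" "\<forall>i<n. w i \<noteq> 0" "w 0 = 1" "n \<ge> 1"
  shows "cyclic_code w \<in> nontriv_codes n 1 0"
  using assms is_code_cyclic_code has_type_cyclic_code no_trivial_ext_if_nonzero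
  unfolding nontriv_codes_def by blast

lemma code_equiv_nontriv_codes_1_0_iff:
  assumes "n \<ge> 1" "C \<in> nontriv_codes n 1 0" "D \<in> nontriv_codes n 1 0"
  shows "code_equiv n C D \<longleftrightarrow> even_coord_count n C = even_coord_count n D"
proof -
  obtain w where w: "w \<in> Z4vec n" "\<forall>i<n. w i \<noteq> 0" "C = cyclic_code w"
    using nontriv_codes_1_0_cyclic[OF assms(1,2)] by metis
  obtain w' where w': "w' \<in> Z4vec n" "\<forall>i<n. w' i \<noteq> 0" "D = cyclic_code w'"
    using nontriv_codes_1_0_cyclic[OF assms(1,3)] by metis
  show ?thesis
    using card_even_coords_eq_if_code_equiv[OF _ w(1) w'(1)]
      code_equiv_if_card_even_coords_eq[OF w(1,2) w'(1,2)]
      even_coord_count_cyclic_code[OF w(1)] even_coord_count_cyclic_code[OF w'(1)] w(3) w'(3)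
    by auto
qed

lemma even_coord_count_nontriv_codes_1_0:
  assumes "n \<ge> 1"
  shows "even_coord_count n ` nontriv_codes n 1 0 = {..<n}"
proof (intro equalityI subsetI)
  fix k assume "k \<in> even_coord_count n ` nontriv_codes n 1 0"
  then obtain C where "C \<in> nontriv_codes n 1 0" "k = even_coord_count n C" by blast
  then show "k \<in> {..<n}"
    using nontriv_codes_1_0_cyclic[OF assms] even_coord_count_cyclic_code card_even_coords_less
    by (metis lessThan_iff)
next
  fix k assume "k \<in> {..<n}"
  define w :: "nat \<Rightarrow> int" where "w i = (if i < n - k then 1 else if i < n then 2 else 0)" for i
  have w: "w \<in> Z4vec n" "\<forall>i<n. w i \<noteq> 0" "w 0 = 1"
    using \<open>k \<in> {..<n}\<close> unfolding w_def Z4vec_def by auto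
  have "even_coords n w = {n - k..<n}" unfolding even_coords_def w_def by auto
  then have "even_coord_count n (cyclic_code w) = k"
    using even_coord_count_cyclic_code[OF w(1)] \<open>k \<in> {..<n}\<close> by simp
  then show "k \<in> even_coord_count n ` nontriv_codes n 1 0"
    using cyclic_code_in_nontriv_codes[OF w assms] by force
qed

theorem mainTheorem6:
  fixes n :: nat
  assumes "n \<ge> 1"
  shows "Nprime n 1 0 = n"
proof -
  have "card (nontriv_codes n 1 0 // {(C, D). C \<in> nontriv_codes n 1 0 \<and> D \<in> nontriv_codes n 1 0
      \<and> code_equiv n C D}) = card (even_coord_count n ` nontriv_codes n 1 0)"
    using code_equiv_nontriv_codes_1_0_iff[OF assms] by (intro card_quotient_eq_card_image) auto
  then show ?thesis
    unfolding Nprime_def even_coord_count_nontriv_codes_1_0[OF assms] by simp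
qed

end
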